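(* Let $X$ be an infinite domain, let $H$ be a countable collection of hypotheses $h:X\to\{0,1\}$, and let $\varepsilon\ge0$. Then for no $n\in\mathbb{N}$ is there an $\varepsilon$-differentially private $(1/3,1/3)$-accurate PAC learner for the point functions over $X$ using the hypothesis class $H$ with sample complexity $n$.
   Context: Point functions over $X$: $\{c_x:x\in X\}$ with $c_x(y)=1$ iff $y=x$. An $(\alpha,\beta)$-accurate PAC learner for a concept class $C$ using hypothesis class $H$ with sample complexity $n$ is an algorithm $L:(X\times\{0,1\})^n\to H$ such that for every $c\in C$ and every distribution $\mathcal{D}$ on $X$, given $(x_i,c(x_i))_{i=1}^n$ with $x_i$ i.i.d. from $\mathcal{D}$, it outputs $h\in H$ with $\Pr[\Pr_{x\sim\mathcal{D}}[h(x)\ne c(x)]\le\alpha]\ge1-\beta$. $\varepsilon$-differential privacy: for all $D,D'\in(X\times\{0,1\})^n$ differing in one row and all $T\subseteq H$, $\Pr[L(D)\in T]\le e^\varepsilon\Pr[L(D')\in T]$. *)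

theory Defs
  imports "HOL-Probability.Probability"
begin

definition point_function :: "'a \<Rightarrow> ('a \<Rightarrow> bool)" where
  "point_function x = (\<lambda>y. y = x)"

definition point_functions :: "('a \<Rightarrow> bool) set" where
  "point_functions = range point_function"

fun iid_sample :: "nat \<Rightarrow> 'a pmf \<Rightarrow> 'a list pmf" where
  "iid_sample 0 D = return_pmf []"
| "iid_sample (Suc n) D = bind_pmf D (\<lambda>x. map_pmf (Cons x) (iid_sample n D))"

definition neighbouring :: "'b list \<Rightarrow> 'b list \<Rightarrow> bool" where
  "neighbouring D D' \<longleftrightarrow> length D = length D' \<and>
     (\<exists>i < length D. \<forall>j < length D. j \<noteq> i \<longrightarrow> D ! j = D' ! j)"

definition uses_hypothesis_class ::
  "nat \<Rightarrow> (('a \<times> bool) list \<Rightarrow> ('a \<Rightarrow> bool) pmf) \<Rightarrow> ('a \<Rightarrow> bool) set \<Rightarrow> bool" where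
  "uses_hypothesis_class n L H \<longleftrightarrow> (\<forall>S. length S = n \<longrightarrow> set_pmf (L S) \<subseteq> H)"

definition differentially_private ::
  "real \<Rightarrow> nat \<Rightarrow> (('a \<times> bool) list \<Rightarrow> ('a \<Rightarrow> bool) pmf) \<Rightarrow> bool" where
  "differentially_private \<epsilon> n L \<longleftrightarrow>
     (\<forall>S S' T. length S = n \<longrightarrow> neighbouring S S' \<longrightarrow>
        measure_pmf.prob (L S) T \<le> exp \<epsilon> * measure_pmf.prob (L S') T)"

definition error :: "'a pmf \<Rightarrow> ('a \<Rightarrow> bool) \<Rightarrow> ('a \<Rightarrow> bool) \<Rightarrow> real" where
  "error D h c = measure_pmf.prob D {x. h x \<noteq> c x}"

definition PAC_learner ::
  "('a \<Rightarrow> bool) set \<Rightarrow> real \<Rightarrow> real \<Rightarrow> nat \<Rightarrow> (('a \<times> bool) list \<Rightarrow> ('a \<Rightarrow> bool) pmf) \<Rightarrow> bool" where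
  "PAC_learner C \<alpha> \<beta> n L \<longleftrightarrow>
     (\<forall>c\<in>C. \<forall>D :: 'a pmf.
        measure_pmf.prob
          (bind_pmf (iid_sample n D) (\<lambda>xs. L (map (\<lambda>x. (x, c x)) xs)))
          {h. error D h c \<le> \<alpha>} \<ge> 1 - \<beta>)"

end

theory Submission
  imports Defs
begin

text \<open>
  The output distribution of the learner on a fixed sample is, up to any \<delta> > 0, carried by a
  finite set F of hypotheses; by group privacy (chaining the privacy guarantee along n
  neighbouring samples) the same F carries all but e^(\<epsilon> n) \<delta> of the output distribution on
  every sample. Finitely many hypotheses cannot separate all points of an infinite domain, so
  some x \<noteq> y are labelled alike by every h \<in> F. Each such h has error 1/2 for the target c_x
  under the uniform distribution on {x, y}, so the learner almost never outputs a hypothesis of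
  error at most 1/3, contradicting accuracy.
\<close>

lemma exists_finite_measure_pmf_gt:
  fixes p :: "'b pmf"
  assumes "d > 0"
  obtains F where "finite F" "measure_pmf.prob p F > 1 - d"
proof -
  have "(pmf p has_sum 1) UNIV"
  proof -
    have "pmf p summable_on UNIV"
      using abs_summable_equivalent[of "pmf p" UNIV] pmf_abs_summable[of p UNIV]
      by (metis abs_summable_summable)
    moreover have "infsum (pmf p) UNIV = 1"
      using infsetsum_infsum[OF pmf_abs_summable[of p UNIV]]
        measure_pmf_conv_infsetsum[of p UNIV]
      by simp
    ultimately show ?thesis
      using summable_iff_has_sum_infsum by metis
  qed
  then have "eventually (\<lambda>F. dist (sum (pmf p) F) 1 < d) (finite_subsets_at_top UNIV)"
    using assms tendstoD by (auto simp: has_sum_def)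
  then obtain F where "finite F" "dist (sum (pmf p) F) 1 < d"
    by (auto simp: eventually_finite_subsets_at_top)
  then show ?thesis
    by (intro that[of F]) (auto simp: measure_measure_pmf_finite dist_real_def)
qed

lemma finite_family_not_separating:
  assumes "infinite (UNIV :: 'a set)" "finite (F :: ('a \<Rightarrow> bool) set)"
  obtains x y where "x \<noteq> y" "\<forall>h\<in>F. h x = h y"
proof -
  define signature where "signature z = restrict (\<lambda>h. h z) F" for z :: 'a
  have "\<not> inj signature"
  proof
    assume "inj signature"
    moreover have "range signature \<subseteq> PiE F (\<lambda>_. UNIV)"
      unfolding signature_def by auto
    moreover have "finite (PiE F (\<lambda>_. UNIV :: bool set))"
      using assms(2) by (simp add: finite_PiE)
    ultimately have "finite (UNIV :: 'a set)"
      by (meson finite_imageD finite_subset)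
    with assms(1) show False by simp
  qed
  then obtain x y where "x \<noteq> y" "signature x = signature y"
    by (auto simp: inj_def)
  moreover from this(2) have "\<forall>h\<in>F. h x = h y"
    unfolding signature_def by (metis restrict_apply')
  ultimately show ?thesis using that by blast
qed

lemma length_iid_sample: "xs \<in> set_pmf (iid_sample n D) \<Longrightarrow> length xs = n"
  by (induction n arbitrary: xs) auto

lemma measure_bind_pmf_le:
  assumes "\<And>x. x \<in> set_pmf M \<Longrightarrow> measure_pmf.prob (f x) A \<le> B" "B \<ge> 0"
  shows "measure_pmf.prob (bind_pmf M f) A \<le> B"
proof -
  have "emeasure (measure_pmf (bind_pmf M f)) A = (\<integral>\<^sup>+x. emeasure (measure_pmf (f x)) A \<partial>M)"
    by simp
  also have "\<dots> \<le> (\<integral>\<^sup>+x. ennreal B \<partial>M)"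
    by (intro nn_integral_mono_AE AE_pmfI)
       (use assms in \<open>auto simp: measure_pmf.emeasure_eq_measure\<close>)
  also have "\<dots> = ennreal B" by simp
  finally show ?thesis
    using assms(2) by (simp add: measure_pmf.emeasure_eq_measure)
qed

lemma neighbouring_take_drop:
  assumes "length xs = length ys" "k < length xs"
  shows "neighbouring (take k ys @ drop k xs) (take (Suc k) ys @ drop (Suc k) xs)"
proof -
  have "(take k ys @ drop k xs) ! j = (take (Suc k) ys @ drop (Suc k) xs) ! j"
    if "j < length xs" "j \<noteq> k" for j
  proof (cases "j < k")
    case True
    then show ?thesis using assms by (simp add: nth_append)
  next
    case False
    with that have "Suc k \<le> j" by simp
    then show ?thesis using assms that by (simp add: nth_append)
  qed
  moreover have "length (take k ys @ drop k xs) = length xs"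
    "length (take (Suc k) ys @ drop (Suc k) xs) = length xs"
    using assms by simp_all
  ultimately show ?thesis
    unfolding neighbouring_def using assms(2) by metis
qed

lemma differentially_private_group_privacy:
  assumes dp: "differentially_private \<epsilon> n L" and "length S = n" "length S' = n"
  shows "measure_pmf.prob (L S) T \<le> exp \<epsilon> ^ n * measure_pmf.prob (L S') T"
proof -
  define hybrid where "hybrid k = take k S' @ drop k S" for k
  have "measure_pmf.prob (L S) T \<le> exp \<epsilon> ^ k * measure_pmf.prob (L (hybrid k)) T"
    if "k \<le> n" for k
    using that
  proof (induction k)
    case 0
    then show ?case by (simp add: hybrid_def)
  next
    case (Suc k)
    have "measure_pmf.prob (L (hybrid k)) T \<le> exp \<epsilon> * measure_pmf.prob (L (hybrid (Suc k))) T"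
      using dp neighbouring_take_drop[of S S' k] Suc.prems assms(2,3)
      unfolding differentially_private_def hybrid_def by simp
    then have "exp \<epsilon> ^ k * measure_pmf.prob (L (hybrid k)) T
        \<le> exp \<epsilon> ^ Suc k * measure_pmf.prob (L (hybrid (Suc k))) T"
      by (simp add: mult_left_mono ac_simps)
    with Suc.IH Suc.prems show ?case by (meson Suc_leD order_trans)
  qed
  from this[of n] show ?thesis
    using assms(2,3) by (simp add: hybrid_def)
qed

lemma differentially_private_outputs_concentrated:
  assumes "differentially_private \<epsilon> n L" "\<delta> > 0"
  obtains F where "finite F" "\<And>S. length S = n \<Longrightarrow> measure_pmf.prob (L S) (- F) \<le> \<delta>"
proof -
  define K where "K = exp \<epsilon> ^ n"
  define p where "p = L (replicate n (undefined, True))"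
  have "K > 0" by (simp add: K_def)
  obtain F where "finite F" and F: "measure_pmf.prob p F > 1 - \<delta> / K"
    using exists_finite_measure_pmf_gt[of "\<delta> / K" p] \<open>K > 0\<close> assms(2) by auto
  have "measure_pmf.prob p (- F) = 1 - measure_pmf.prob p F"
    using measure_pmf.prob_compl[of F p] by (simp add: Compl_eq_Diff_UNIV)
  with F have "measure_pmf.prob p (- F) < \<delta> / K" by simp
  then have small: "K * measure_pmf.prob p (- F) \<le> \<delta>"
    using \<open>K > 0\<close> by (simp add: pos_less_divide_eq mult.commute)
  show ?thesis
  proof (rule that[OF \<open>finite F\<close>])
    fix S :: "('a \<times> bool) list"
    assume "length S = n"
    then have "measure_pmf.prob (L S) (- F) \<le> K * measure_pmf.prob p (- F)"
      unfolding K_def p_def by (intro differentially_private_group_privacy[OF assms(1)]) simp_all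
    with small show "measure_pmf.prob (L S) (- F) \<le> \<delta>" by simp
  qed
qed

lemma measure_learner_iid_sample_le:
  assumes "\<And>S. length S = n \<Longrightarrow> measure_pmf.prob (L S) T \<le> \<delta>" "\<delta> \<ge> 0"
  shows "measure_pmf.prob (bind_pmf (iid_sample n D) (\<lambda>xs. L (map (\<lambda>x. (x, c x)) xs))) T \<le> \<delta>"
  using assms by (intro measure_bind_pmf_le) (auto dest: length_iid_sample)

lemma accurate_for_point_function_separates:
  assumes "x \<noteq> y" "error (pmf_of_set {x, y}) h (point_function x) \<le> 1/3"
  shows "h x \<noteq> h y"
proof
  assume "h x = h y"
  then have "{x, y} \<inter> {z. h z \<noteq> point_function x z} = (if h x then {y} else {x})"
    using assms(1) by (auto simp: point_function_def)
  then have "error (pmf_of_set {x, y}) h (point_function x) = 1/2"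
    using assms(1) by (simp add: error_def measure_pmf_of_set)
  with assms(2) show False by simp
qed

theorem theorem7p2:
  fixes H :: "('a \<Rightarrow> bool) set" and \<epsilon> :: real
  assumes "infinite (UNIV :: 'a set)"
    and "countable H"
    and "\<epsilon> \<ge> 0"
  shows "\<not> (\<exists>(n::nat) (L :: ('a \<times> bool) list \<Rightarrow> ('a \<Rightarrow> bool) pmf).
            uses_hypothesis_class n L H \<and>
            differentially_private \<epsilon> n L \<and>
            PAC_learner point_functions (1/3) (1/3) n L)"
proof
  assume "\<exists>n L. uses_hypothesis_class n L H \<and> differentially_private \<epsilon> n L \<and>
            PAC_learner point_functions (1/3) (1/3) n L"
  then obtain n and L :: "('a \<times> bool) list \<Rightarrow> ('a \<Rightarrow> bool) pmf" where
    dp: "differentially_private \<epsilon> n L" and pac: "PAC_learner point_functions (1/3) (1/3) n L"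
    by blast
  obtain F where "finite F" and F: "\<And>S. length S = n \<Longrightarrow> measure_pmf.prob (L S) (- F) \<le> 1/4"
    using differentially_private_outputs_concentrated[OF dp, of "1/4"] by auto
  obtain x y where "x \<noteq> y" and xy: "\<forall>h\<in>F. h x = h y"
    using finite_family_not_separating[OF assms(1) \<open>finite F\<close>] by blast
  define D where "D = pmf_of_set {x, y}"
  define c where "c = point_function x"
  define good where "good = {h. error D h c \<le> 1/3}"
  have "good \<subseteq> - F"
    using accurate_for_point_function_separates[OF \<open>x \<noteq> y\<close>] xy
    unfolding good_def D_def c_def by blast
  then have "measure_pmf.prob (L S) good \<le> 1/4" if "length S = n" for S
    using F[OF that] measure_pmf.finite_measure_mono[of good "- F" "L S"] by simp
  then have "measure_pmf.prob (bind_pmf (iid_sample n D) (\<lambda>xs. L (map (\<lambda>x. (x, c x)) xs))) good \<le> 1/4"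
    by (rule measure_learner_iid_sample_le) auto
  moreover have "c \<in> point_functions"
    by (simp add: c_def point_functions_def)
  with pac have "measure_pmf.prob (bind_pmf (iid_sample n D) (\<lambda>xs. L (map (\<lambda>x. (x, c x)) xs))) good \<ge> 1 - 1/3"
    unfolding PAC_learner_def good_def by blast
  ultimately show False by simp
qed

end
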